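(* Let $\mathbb{F}$ be a field of characteristic $p$, $\mathbb{E}$ an extension field, $f\in\mathbb{F}[x]$, and let $M\le\mathbb{E}^*$ be an automatically non-standard $f$-subgroup of size $m$. Let $L$ be a finite subgroup of $\mathbb{E}^*$ with $M\le L$, and let $k=|L|/|M|$. Then $L$ is an automatically non-standard $g$-subgroup for $g(x)=f(x^k)$.
   Context: $\phi_{p,m}$ is the $m$th cyclotomic polynomial reduced mod $p$ (if $p>0$); for $\gcd(m,p)=1$ its zeros are the primitive $m$th roots of unity. An $f$-sequence is a two-way infinite sequence with $f(\sigma)s=0$, $(\sigma s)_n=s_{n+1}$. Definition: for $m>1$ with $\gcd(m,p)=1$ if $p>0$, if $f\in\mathbb{F}[x]$ divides $(x^m-1)/((x-1)\phi_{p,m}(x))$ and an $f$-sequence $s$ of period $m$ (over an extension of $\mathbb{F}$) has $M=\{s_0,\ldots,s_{m-1}\}$ a subgroup of size $m$, then $M$ is an automatically non-standard $f$-subgroup. *)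

theory Defs
  imports "HOL-Computational_Algebra.Computational_Algebra"
begin

function cyclo :: "nat \<Rightarrow> int poly" where
  "cyclo n = (if n = 0 then 1 else
      ([:-1:] + monom 1 n) div (\<Prod>d\<in>{d. d dvd n \<and> d < n}. cyclo d))"
  by auto
termination
  by (relation "measure id") auto

(* phi_{p,m}: the cyclotomic polynomial reduced into the field 'a
   (characteristic p = CHAR('a)), i.e. reduced mod p. *)
definition cyclo_red :: "nat \<Rightarrow> 'a::field poly" where
  "cyclo_red m = map_poly of_int (cyclo m)"

(* emb : 'f \<rightarrow> 'e is a field embedding, i.e. 'e is an extension field of 'f *)
definition field_embedding :: "('f::field \<Rightarrow> 'e::field) \<Rightarrow> bool" where
  "field_embedding emb \<longleftrightarrow> emb 0 = 0 \<and> emb 1 = 1 \<and>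
     (\<forall>a b. emb (a + b) = emb a + emb b) \<and> (\<forall>a b. emb (a * b) = emb a * emb b)"

definition f_sequence :: "('f::field \<Rightarrow> 'e::field) \<Rightarrow> 'f poly \<Rightarrow> (int \<Rightarrow> 'e) \<Rightarrow> bool" where
  "f_sequence emb f s \<longleftrightarrow> (\<forall>n. (\<Sum>i\<le>degree f. emb (coeff f i) * s (n + int i)) = 0)"

definition mult_subgroup :: "'e::field set \<Rightarrow> bool" where
  "mult_subgroup M \<longleftrightarrow> M \<subseteq> - {0} \<and> 1 \<in> M \<and>
     (\<forall>a\<in>M. \<forall>b\<in>M. a * b \<in> M) \<and> (\<forall>a\<in>M. inverse a \<in> M)"

definition ans_subgroup :: "('f::field \<Rightarrow> 'e::field) \<Rightarrow> 'f poly \<Rightarrow> 'e set \<Rightarrow> bool" where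
  "ans_subgroup emb f M \<longleftrightarrow>
     (let m = card M; p = CHAR('f) in
       finite M \<and> m > 1 \<and> (p > 0 \<longrightarrow> coprime m p) \<and>
       f dvd ((monom 1 m - 1) div ([:-1, 1:] * cyclo_red m)) \<and>
       mult_subgroup M \<and>
       (\<exists>s. f_sequence emb f s \<and> (\<forall>n. s (n + int m) = s n) \<and>
            s ` {0..<int m} = M))"

end

theory Submission
  imports Defs
begin

(* L is the disjoint union of k cosets c_0 M, ..., c_(k-1) M.  If s runs through M with period m
   and s is annihilated by f(sigma), then the interleaved sequence t_(kq+r) = c_r s_q runs through
   L with period mk, and g(sigma) = f(sigma^k) only couples indices in the same residue class
   mod k, on each of which t is a constant multiple of s.
   For the polynomial condition write Q_m = (x^m - 1)/((x - 1) Phi_m).  Over the complex numbers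
   (x - 1) Phi_(mk) has the simple roots 1 and the primitive mk-th roots of unity z, and z^k is a
   primitive m-th root of unity; so (x - 1) Phi_(mk) divides (x^k - 1) Phi_m(x^k), and comparing
   with x^(mk) - 1 = (x^k - 1) Phi_m(x^k) Q_m(x^k) gives Q_m(x^k) | Q_(mk) over the integers,
   hence over every field.  Finally |L| is prime to p, since otherwise the Frobenius map would
   force all of L into the roots of x^(|L|/p) - 1. *)

declare cyclo.simps [simp del] mult_pCons_left [simp del]

section \<open>Integer polynomials in rings\<close>

abbreviation of_int_poly :: "int poly \<Rightarrow> 'a::comm_ring_1 poly" where
  "of_int_poly \<equiv> map_poly of_int"

lemma coeff_of_int_poly: "coeff (of_int_poly p :: 'a::comm_ring_1 poly) n = of_int (coeff p n)"
  by (simp add: coeff_map_poly)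

lemma of_int_poly_add: "of_int_poly (p + q) = (of_int_poly p + of_int_poly q :: 'a::comm_ring_1 poly)"
  by (rule poly_eqI) (simp add: coeff_of_int_poly)

lemma of_int_poly_diff: "of_int_poly (p - q) = (of_int_poly p - of_int_poly q :: 'a::comm_ring_1 poly)"
  by (rule poly_eqI) (simp add: coeff_of_int_poly)

lemma of_int_poly_mult: "of_int_poly (p * q) = (of_int_poly p * of_int_poly q :: 'a::comm_ring_1 poly)"
  by (rule poly_eqI) (simp add: coeff_of_int_poly coeff_mult)

lemma of_int_poly_prod:
  "of_int_poly (prod f A) = (\<Prod>x\<in>A. of_int_poly (f x) :: 'a::comm_ring_1 poly)"
  by (induction A rule: infinite_finite_induct) (auto simp: of_int_poly_mult)

lemma of_int_poly_pCons: "of_int_poly (pCons c p) = (pCons (of_int c) (of_int_poly p) :: 'a::comm_ring_1 poly)"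
  by (simp add: map_poly_pCons)

lemma of_int_poly_monom: "of_int_poly (monom c n) = (monom (of_int c) n :: 'a::comm_ring_1 poly)"
  by (simp add: map_poly_monom)

lemma of_int_poly_monom_minus_1: "of_int_poly (monom 1 n - 1) = (monom 1 n - 1 :: 'a::comm_ring_1 poly)"
  by (simp add: of_int_poly_diff of_int_poly_monom)

lemma of_int_poly_x_minus_1: "of_int_poly [:-1, 1:] = ([:-1, 1:] :: 'a::comm_ring_1 poly)"
  by (simp add: of_int_poly_pCons)

lemma of_int_poly_pcompose:
  "of_int_poly (p \<circ>\<^sub>p q) = (of_int_poly p \<circ>\<^sub>p of_int_poly q :: 'a::comm_ring_1 poly)"
  by (induction p) (simp_all add: pcompose_pCons of_int_poly_pCons of_int_poly_add of_int_poly_mult)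

lemma of_int_poly_dvd_of_int_poly: "p dvd q \<Longrightarrow> (of_int_poly p :: 'a::comm_ring_1 poly) dvd of_int_poly q"
  by (auto elim!: dvdE simp: of_int_poly_mult)

lemma of_int_poly_eq_0_iff: "(of_int_poly p :: 'a::{idom,ring_char_0} poly) = 0 \<longleftrightarrow> p = 0"
  by (rule map_poly_eq_0_iff) auto

lemma degree_of_int_poly: "degree (of_int_poly p :: 'a::{idom,ring_char_0} poly) = degree p"
  by (rule degree_map_poly) auto

lemma of_int_poly_neq_0_if_monic:
  "lead_coeff p = 1 \<Longrightarrow> (of_int_poly p :: 'a::comm_ring_1 poly) \<noteq> 0"
proof -
  assume "lead_coeff p = 1"
  hence "lead_coeff (of_int_poly p :: 'a poly) = 1" by (subst lead_coeff_map_poly_nz) auto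
  thus ?thesis by auto
qed

lemma div_of_int_poly_monic:
  assumes "lead_coeff b = 1" "a = b * c"
  shows "(of_int_poly a :: 'a::field poly) div of_int_poly b = of_int_poly c"
  using assms of_int_poly_neq_0_if_monic[OF assms(1), where 'a='a] by (simp add: of_int_poly_mult)

text \<open>Division by a monic integer polynomial leaves an integer remainder, which must vanish
  if the division is exact in a larger domain.\<close>

lemma monic_dvd_of_int_poly_dvd:
  fixes a b :: "int poly"
  assumes monic: "lead_coeff b = 1"
    and dvd: "(of_int_poly b :: 'a::{idom,ring_char_0} poly) dvd of_int_poly a"
  shows "b dvd a"
proof (rule ccontr)
  assume not_dvd: "\<not> b dvd a"
  have "b \<noteq> 0" using monic by auto
  obtain q r where qr: "pseudo_divmod a b = (q, r)" by (cases "pseudo_divmod a b") auto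
  have "a = b * q + r" using pseudo_divmod(1)[OF \<open>b \<noteq> 0\<close> qr] monic by simp
  moreover have "r = 0 \<or> degree r < degree b" by (rule pseudo_divmod(2)[OF \<open>b \<noteq> 0\<close> qr])
  ultimately have r: "r \<noteq> 0" "degree r < degree b" using not_dvd by auto
  from dvd obtain Q where Q: "(of_int_poly a :: 'a poly) = of_int_poly b * Q" by (auto elim: dvdE)
  have "(of_int_poly a :: 'a poly) = of_int_poly b * of_int_poly q + of_int_poly r"
    by (simp add: \<open>a = b * q + r\<close> of_int_poly_add of_int_poly_mult)
  hence rQ: "(of_int_poly r :: 'a poly) = of_int_poly b * (Q - of_int_poly q)"
    unfolding Q by (simp add: right_diff_distrib)
  moreover have "(of_int_poly r :: 'a poly) \<noteq> 0" using r(1) by (simp add: of_int_poly_eq_0_iff)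
  ultimately have "Q - of_int_poly q \<noteq> 0" by auto
  hence "degree (of_int_poly r :: 'a poly) =
      degree (of_int_poly b :: 'a poly) + degree (Q - of_int_poly q)"
    unfolding rQ using of_int_poly_neq_0_if_monic[OF monic] by (intro degree_mult_eq) auto
  thus False using r by (simp add: degree_of_int_poly)
qed

section \<open>Polynomials with prescribed simple roots\<close>

definition vanishing_poly :: "'a::comm_ring_1 set \<Rightarrow> 'a poly" where
  "vanishing_poly S = (\<Prod>z\<in>S. [:-z, 1:])"

lemma lead_coeff_vanishing_poly [simp]: "lead_coeff (vanishing_poly (S :: 'a::idom set)) = 1"
  by (simp add: vanishing_poly_def lead_coeff_prod)

lemma vanishing_poly_neq_0 [simp]: "vanishing_poly (S :: 'a::idom set) \<noteq> 0"
  using lead_coeff_vanishing_poly[of S] by (metis leading_coeff_0_iff zero_neq_one)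

lemma degree_vanishing_poly: "finite S \<Longrightarrow> degree (vanishing_poly (S :: 'a::idom set)) = card S"
  by (simp add: vanishing_poly_def degree_prod_eq_sum_degree)

lemma vanishing_poly_Un:
  "finite S \<Longrightarrow> finite T \<Longrightarrow> S \<inter> T = {} \<Longrightarrow>
    vanishing_poly (S \<union> T) = vanishing_poly S * vanishing_poly T"
  by (simp add: vanishing_poly_def prod.union_disjoint)

lemma poly_vanishing_poly_eq_0: "finite S \<Longrightarrow> z \<in> S \<Longrightarrow> poly (vanishing_poly S) z = 0"
  by (auto simp: vanishing_poly_def poly_prod intro!: prod_zero)

lemma vanishing_poly_dvd:
  fixes q :: "'a::idom poly"
  assumes "finite S" "\<And>z. z \<in> S \<Longrightarrow> poly q z = 0"
  shows "vanishing_poly S dvd q"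
  using assms
proof (induction S arbitrary: q rule: finite_induct)
  case empty
  thus ?case by (simp add: vanishing_poly_def)
next
  case (insert a S)
  obtain q' where q': "q = [:-a, 1:] * q'"
    using insert.prems by (auto simp: poly_eq_0_iff_dvd elim: dvdE)
  have "poly q' z = 0" if "z \<in> S" for z
  proof -
    have "z \<noteq> a" "poly q z = 0" using insert that by auto
    thus ?thesis using q' by simp
  qed
  hence "vanishing_poly S dvd q'" using insert.IH by blast
  thus ?case using insert.hyps q' by (simp add: vanishing_poly_def)
qed

lemma monic_dvd_antisym:
  fixes a b :: "'a::idom poly"
  assumes "lead_coeff a = 1" "lead_coeff b = 1" "degree a = degree b" "b dvd a"
  shows "a = b"
proof -
  obtain q where q: "a = b * q" using assms(4) by (auto elim: dvdE)
  have "a \<noteq> 0" "b \<noteq> 0" using assms by auto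
  hence "degree q = 0" using q assms(3) by (simp add: degree_mult_eq)
  then obtain c where c: "q = [:c:]" by (metis degree_eq_zeroE)
  have "lead_coeff a = lead_coeff b * c" using q c by (simp add: lead_coeff_mult)
  hence "c = 1" using assms(1,2) by simp
  thus ?thesis using q c by simp
qed

lemma degree_monom_minus_1: "n > 0 \<Longrightarrow> degree (monom 1 n - 1 :: 'a::comm_ring_1 poly) = n"
proof -
  assume "n > 0"
  hence "degree (- 1 + monom 1 n :: 'a poly) = n"
    by (subst degree_add_eq_right) (auto simp: degree_monom_eq)
  thus ?thesis by simp
qed

lemma lead_coeff_monom_minus_1: "n > 0 \<Longrightarrow> lead_coeff (monom 1 n - 1 :: 'a::comm_ring_1 poly) = 1"
  by (simp add: degree_monom_minus_1)

lemma monom_one_pcompose: "monom 1 m \<circ>\<^sub>p q = (q ^ m :: 'a::comm_ring_1 poly)"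
  by (simp add: pcompose_altdef map_poly_monom poly_monom one_pCons[symmetric])

lemma monom_minus_1_pcompose_monom:
  "(monom 1 m - 1) \<circ>\<^sub>p monom 1 k = (monom 1 (m * k) - 1 :: 'a::comm_ring_1 poly)"
  by (simp add: pcompose_diff pcompose_1 monom_one_pcompose monom_power mult.commute)

lemma x_minus_1_pcompose: "[:-1, 1:] \<circ>\<^sub>p q = (q - 1 :: 'a::comm_ring_1 poly)"
  by (simp add: pcompose_pCons one_pCons[symmetric] pcompose_1) (simp add: one_pCons)

lemma coeff_pcompose_monom:
  "coeff (f \<circ>\<^sub>p monom 1 k) i =
    (\<Sum>l\<le>degree f. if k * l = i then coeff f l else (0 :: 'a::comm_ring_1))"
proof -
  have "f \<circ>\<^sub>p monom 1 k = (\<Sum>l\<le>degree f. [:coeff f l:] * monom 1 k ^ l)"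
    by (simp add: pcompose_altdef poly_altdef degree_map_poly coeff_map_poly)
  also have "\<dots> = (\<Sum>l\<le>degree f. monom (coeff f l) (k * l))"
    by (simp add: monom_power mult.commute smult_monom)
  finally show ?thesis by (simp add: coeff_sum coeff_monom)
qed

lemma pcompose_dvd_pcompose: "p dvd q \<Longrightarrow> p \<circ>\<^sub>p r dvd q \<circ>\<^sub>p (r :: 'a::comm_ring_1 poly)"
  by (auto elim!: dvdE simp: pcompose_mult)

section \<open>Roots of unity and cyclotomic polynomials\<close>

definition unity_roots :: "nat \<Rightarrow> complex set" where
  "unity_roots n = {z. z ^ n = 1}"

definition prim_roots :: "nat \<Rightarrow> complex set" where
  "prim_roots n = {z. z ^ n = 1 \<and> (\<forall>j. 0 < j \<longrightarrow> j < n \<longrightarrow> z ^ j \<noteq> 1)}"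

lemma finite_unity_roots: "n > 0 \<Longrightarrow> finite (unity_roots n)"
  unfolding unity_roots_def by (rule finite_roots_unity) auto

lemma prim_roots_subset: "prim_roots n \<subseteq> unity_roots n"
  by (auto simp: prim_roots_def unity_roots_def)

lemma finite_prim_roots: "n > 0 \<Longrightarrow> finite (prim_roots n)"
  using finite_unity_roots prim_roots_subset finite_subset by blast

lemma one_notin_prim_roots: "n > 1 \<Longrightarrow> 1 \<notin> prim_roots n"
  by (auto simp: prim_roots_def intro!: exI[of _ 1])

lemma prim_roots_disjoint:
  assumes "0 < d" "0 < e" "d \<noteq> e"
  shows "prim_roots d \<inter> prim_roots e = {}"
  using assms by (cases d e rule: linorder_cases) (auto simp: prim_roots_def)

lemma power_in_prim_roots:
  assumes "z \<in> prim_roots (m * k)" "k > 0"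
  shows "z ^ k \<in> prim_roots m"
  using assms by (auto simp: prim_roots_def mult.commute[of m] simp flip: power_mult)

lemma vanishing_poly_unity_roots:
  assumes "n > 0"
  shows "vanishing_poly (unity_roots n) = monom 1 n - 1"
proof (rule monic_dvd_antisym[symmetric])
  show "vanishing_poly (unity_roots n) dvd monom 1 n - 1"
    using assms by (intro vanishing_poly_dvd) (auto simp: finite_unity_roots unity_roots_def poly_monom)
  show "degree (monom 1 n - 1 :: complex poly) = degree (vanishing_poly (unity_roots n))"
    using assms card_roots_unity_eq[of n]
    by (simp add: degree_monom_minus_1 degree_vanishing_poly finite_unity_roots) (simp add: unity_roots_def)
qed (simp_all add: assms degree_monom_minus_1)

lemma unity_roots_eq_UN_prim_roots:
  assumes "n > 0"
  shows "unity_roots n = (\<Union>d\<in>{d. d dvd n}. prim_roots d)"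
proof
  show "(\<Union>d\<in>{d. d dvd n}. prim_roots d) \<subseteq> unity_roots n"
    by (auto simp: prim_roots_def unity_roots_def elim!: dvdE simp: power_mult)
next
  show "unity_roots n \<subseteq> (\<Union>d\<in>{d. d dvd n}. prim_roots d)"
  proof
    fix z assume "z \<in> unity_roots n"
    hence zn: "z ^ n = 1" by (simp add: unity_roots_def)
    define d where "d = (LEAST j. 0 < j \<and> z ^ j = 1)"
    have d: "0 < d" "z ^ d = 1"
      using LeastI[of "\<lambda>j. 0 < j \<and> z ^ j = 1" n] assms zn by (auto simp: d_def)
    have d_min: "z ^ j \<noteq> 1" if "0 < j" "j < d" for j
      using not_less_Least[of j "\<lambda>j. 0 < j \<and> z ^ j = 1"] that by (auto simp: d_def)
    have "z ^ n = z ^ (d * (n div d) + n mod d)" by simp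
    also have "\<dots> = z ^ (n mod d)" by (simp only: power_add power_mult) (simp add: d)
    finally have "n mod d = 0" using d_min[of "n mod d"] d zn by (metis mod_less_divisor neq0_conv)
    moreover have "z \<in> prim_roots d" using d d_min by (auto simp: prim_roots_def)
    ultimately show "z \<in> (\<Union>d\<in>{d. d dvd n}. prim_roots d)" by auto
  qed
qed

lemma monom_minus_1_eq_vanishing_poly_split:
  assumes "n > 0"
  shows "monom 1 n - 1 =
    vanishing_poly (\<Union>d\<in>{d. d dvd n \<and> d < n}. prim_roots d) * vanishing_poly (prim_roots n)"
proof -
  define U where "U = (\<Union>d\<in>{d. d dvd n \<and> d < n}. prim_roots d)"
  have divisor_pos: "d > 0" if "d dvd n" for d
    using assms that by (auto intro: Nat.gr0I)
  have "unity_roots n = U \<union> prim_roots n"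
    using unity_roots_eq_UN_prim_roots[OF assms] dvd_imp_le[OF _ assms]
    by (auto simp: U_def le_less)
  moreover have "finite U"
    unfolding U_def using divisor_pos by (auto intro!: finite_prim_roots)
  moreover have "U \<inter> prim_roots n = {}"
    unfolding U_def using divisor_pos assms prim_roots_disjoint by blast
  ultimately show ?thesis
    using vanishing_poly_unity_roots[OF assms] finite_prim_roots[OF assms]
    by (simp add: vanishing_poly_Un U_def)
qed

lemma cyclo_eq_div:
  "n > 0 \<Longrightarrow> cyclo n = (monom 1 n - 1) div (\<Prod>d\<in>{d. d dvd n \<and> d < n}. cyclo d)"
proof -
  have "[:-1:] + monom 1 n = (monom 1 n - 1 :: int poly)"
    by (simp add: one_pCons)
  thus "n > 0 \<Longrightarrow> ?thesis" by (subst cyclo.simps) simp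
qed

lemma of_int_poly_cyclo_and_monic:
  "n > 0 \<Longrightarrow> of_int_poly (cyclo n) = vanishing_poly (prim_roots n) \<and> lead_coeff (cyclo n) = 1"
proof (induction n rule: less_induct)
  case (less n)
  define D where "D = {d. d dvd n \<and> d < n}"
  define P where "P = (\<Prod>d\<in>D. cyclo d)"
  define U where "U = (\<Union>d\<in>D. prim_roots d)"
  have D_pos: "d > 0" if "d \<in> D" for d
    using less.prems that by (auto simp: D_def intro: Nat.gr0I)
  have IH: "of_int_poly (cyclo d) = vanishing_poly (prim_roots d) \<and> lead_coeff (cyclo d) = 1"
    if "d \<in> D" for d
    using less.IH that D_pos by (auto simp: D_def)
  have "finite D" unfolding D_def by (rule finite_subset[of _ "{..<n}"]) auto
  hence "(of_int_poly P :: complex poly) = (\<Prod>d\<in>D. vanishing_poly (prim_roots d))"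
    unfolding P_def of_int_poly_prod using IH by simp
  also have "\<dots> = vanishing_poly U"
    unfolding vanishing_poly_def U_def using \<open>finite D\<close> D_pos prim_roots_disjoint
    by (intro prod.UNION_disjoint[symmetric]) (auto simp: finite_prim_roots)
  finally have P: "(of_int_poly P :: complex poly) = vanishing_poly U" .
  have P_monic: "lead_coeff P = 1" unfolding P_def lead_coeff_prod using IH by simp
  have split: "(monom 1 n - 1 :: complex poly) = vanishing_poly U * vanishing_poly (prim_roots n)"
    unfolding U_def D_def by (rule monom_minus_1_eq_vanishing_poly_split[OF less.prems])
  have "P dvd monom 1 n - 1"
    by (rule monic_dvd_of_int_poly_dvd[OF P_monic, where 'a=complex])
       (simp add: P of_int_poly_monom_minus_1 split)
  hence n_split: "monom 1 n - 1 = P * cyclo n"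
    using cyclo_eq_div[OF less.prems] by (simp add: P_def D_def)
  have "vanishing_poly U * vanishing_poly (prim_roots n) = (of_int_poly (P * cyclo n) :: complex poly)"
    by (simp only: split[symmetric] n_split[symmetric] of_int_poly_monom_minus_1)
  also have "\<dots> = vanishing_poly U * of_int_poly (cyclo n)"
    by (simp add: of_int_poly_mult P)
  finally have "of_int_poly (cyclo n) = vanishing_poly (prim_roots n)" by simp
  moreover have "lead_coeff (monom 1 n - 1 :: int poly) = lead_coeff P * lead_coeff (cyclo n)"
    by (simp only: n_split lead_coeff_mult)
  hence "lead_coeff (cyclo n) = 1"
    using lead_coeff_monom_minus_1[OF less.prems] P_monic by (metis mult_1)
  ultimately show ?case by simp
qed

lemma of_int_poly_cyclo: "n > 0 \<Longrightarrow> of_int_poly (cyclo n) = vanishing_poly (prim_roots n)"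
  using of_int_poly_cyclo_and_monic by blast

lemma lead_coeff_cyclo: "n > 0 \<Longrightarrow> lead_coeff (cyclo n) = 1"
  using of_int_poly_cyclo_and_monic by blast

section \<open>The cofactor of the cyclotomic polynomial\<close>

definition cyclo_cofactor :: "nat \<Rightarrow> int poly" where
  "cyclo_cofactor m = (monom 1 m - 1) div ([:-1, 1:] * cyclo m)"

lemma lead_coeff_x_minus_1_times_cyclo: "m > 0 \<Longrightarrow> lead_coeff ([:-1, 1:] * cyclo m) = 1"
  by (simp add: lead_coeff_mult lead_coeff_cyclo)

lemma of_int_poly_x_minus_1_times_cyclo:
  "m > 1 \<Longrightarrow>
    (of_int_poly ([:-1, 1:] * cyclo m) :: complex poly) = vanishing_poly (insert 1 (prim_roots m))"
  by (simp add: of_int_poly_mult of_int_poly_x_minus_1 of_int_poly_cyclo vanishing_poly_def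
      finite_prim_roots one_notin_prim_roots)

lemma monom_minus_1_eq_cyclo_cofactor:
  assumes "m > 1"
  shows "monom 1 m - 1 = ([:-1, 1:] * cyclo m) * cyclo_cofactor m"
proof -
  have "vanishing_poly (insert 1 (prim_roots m)) dvd vanishing_poly (unity_roots m)"
    unfolding vanishing_poly_def using assms prim_roots_subset finite_unity_roots
    by (intro prod_dvd_prod_subset) (auto simp: unity_roots_def)
  hence "[:-1, 1:] * cyclo m dvd monom 1 m - 1"
    using assms
    by (intro monic_dvd_of_int_poly_dvd[OF lead_coeff_x_minus_1_times_cyclo, where 'a=complex])
       (auto simp: of_int_poly_x_minus_1_times_cyclo of_int_poly_monom_minus_1 vanishing_poly_unity_roots)
  thus ?thesis by (simp add: cyclo_cofactor_def)
qed

lemma monom_minus_1_div_cyclo_red: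
  assumes "m > 1"
  shows "(monom 1 m - 1 :: 'a::field poly) div ([:-1, 1:] * cyclo_red m) = of_int_poly (cyclo_cofactor m)"
proof -
  have "(of_int_poly (monom 1 m - 1) :: 'a poly) div of_int_poly ([:-1, 1:] * cyclo m) =
      of_int_poly (cyclo_cofactor m)"
    using assms
    by (intro div_of_int_poly_monic lead_coeff_x_minus_1_times_cyclo monom_minus_1_eq_cyclo_cofactor) auto
  thus ?thesis
    by (simp only: cyclo_red_def of_int_poly_mult of_int_poly_x_minus_1 of_int_poly_monom_minus_1)
qed

lemma x_minus_1_times_cyclo_dvd_pcompose:
  assumes "m > 1" "k > 0"
  shows "[:-1, 1:] * cyclo (m * k) dvd (monom 1 k - 1) * (cyclo m \<circ>\<^sub>p monom 1 k)"
proof -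
  have "m * k > 1" using assms less_le_trans[of 1 m "m * k"] by simp
  hence "finite (prim_roots (m * k))" by (intro finite_prim_roots) linarith
  have "vanishing_poly (insert 1 (prim_roots (m * k))) dvd
      (monom 1 k - 1) * (vanishing_poly (prim_roots m) \<circ>\<^sub>p monom 1 k)"
  proof (rule vanishing_poly_dvd)
    fix z assume "z \<in> insert 1 (prim_roots (m * k))"
    moreover have "poly (vanishing_poly (prim_roots m)) (z ^ k) = 0" if "z \<in> prim_roots (m * k)"
      using power_in_prim_roots[OF that \<open>k > 0\<close>] assms
      by (intro poly_vanishing_poly_eq_0) (auto simp: finite_prim_roots)
    ultimately show "poly ((monom 1 k - 1) * (vanishing_poly (prim_roots m) \<circ>\<^sub>p monom 1 k)) z = 0"
      by (auto simp: poly_pcompose poly_monom)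
  qed (simp add: \<open>finite (prim_roots (m * k))\<close>)
  moreover have "(of_int_poly ((monom 1 k - 1) * (cyclo m \<circ>\<^sub>p monom 1 k)) :: complex poly) =
      (monom 1 k - 1) * (vanishing_poly (prim_roots m) \<circ>\<^sub>p monom 1 k)"
    using assms by (simp add: of_int_poly_mult of_int_poly_monom_minus_1 of_int_poly_pcompose
        of_int_poly_monom of_int_poly_cyclo)
  ultimately show ?thesis
    using \<open>m * k > 1\<close> assms
    by (intro monic_dvd_of_int_poly_dvd[OF lead_coeff_x_minus_1_times_cyclo, where 'a=complex])
       (simp_all add: of_int_poly_x_minus_1_times_cyclo)
qed

lemma cyclo_cofactor_pcompose_dvd:
  assumes "m > 1" "k > 0"
  shows "cyclo_cofactor m \<circ>\<^sub>p monom 1 k dvd cyclo_cofactor (m * k)"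
proof -
  have "m * k > 1" using assms less_le_trans[of 1 m "m * k"] by simp
  obtain C where C: "(monom 1 k - 1) * (cyclo m \<circ>\<^sub>p monom 1 k) = ([:-1, 1:] * cyclo (m * k)) * C"
    using x_minus_1_times_cyclo_dvd_pcompose[OF assms] by (auto elim: dvdE)
  have "([:-1, 1:] * cyclo (m * k)) * cyclo_cofactor (m * k) = (monom 1 m - 1) \<circ>\<^sub>p monom 1 k"
    by (simp only: monom_minus_1_eq_cyclo_cofactor[OF \<open>m * k > 1\<close>, symmetric]
        monom_minus_1_pcompose_monom)
  also have "\<dots> = ([:-1, 1:] * cyclo (m * k)) * (C * (cyclo_cofactor m \<circ>\<^sub>p monom 1 k))"
    unfolding monom_minus_1_eq_cyclo_cofactor[OF assms(1)] pcompose_mult x_minus_1_pcompose C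
    by (simp only: mult.assoc)
  moreover have "[:-1, 1:] * cyclo (m * k) \<noteq> 0"
    using lead_coeff_x_minus_1_times_cyclo[of "m * k"] assms by auto
  ultimately have "cyclo_cofactor (m * k) = C * (cyclo_cofactor m \<circ>\<^sub>p monom 1 k)" by simp
  thus ?thesis by simp
qed

lemma pcompose_monom_dvd_cyclo_quotient:
  fixes f :: "'a::field poly"
  assumes "m > 1" "k > 0" and f: "f dvd (monom 1 m - 1) div ([:-1, 1:] * cyclo_red m)"
  shows "f \<circ>\<^sub>p monom 1 k dvd (monom 1 (m * k) - 1) div ([:-1, 1:] * cyclo_red (m * k))"
proof -
  have "m * k > 1" using assms less_le_trans[of 1 m "m * k"] by simp
  have "f \<circ>\<^sub>p monom 1 k dvd of_int_poly (cyclo_cofactor m) \<circ>\<^sub>p monom 1 k"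
    using f by (intro pcompose_dvd_pcompose) (simp add: monom_minus_1_div_cyclo_red[OF assms(1)])
  also have "\<dots> = of_int_poly (cyclo_cofactor m \<circ>\<^sub>p monom 1 k)"
    by (simp add: of_int_poly_pcompose of_int_poly_monom)
  also have "\<dots> dvd of_int_poly (cyclo_cofactor (m * k))"
    by (rule of_int_poly_dvd_of_int_poly[OF cyclo_cofactor_pcompose_dvd[OF assms(1,2)]])
  finally show ?thesis by (simp add: monom_minus_1_div_cyclo_red[OF \<open>m * k > 1\<close>])
qed

section \<open>Field embeddings and finite subgroups of the multiplicative group\<close>

lemma field_embedding_sum: "field_embedding emb \<Longrightarrow> emb (sum g A) = (\<Sum>x\<in>A. emb (g x))"
  by (induction A rule: infinite_finite_induct) (simp_all add: field_embedding_def)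

lemma field_embedding_of_nat: "field_embedding emb \<Longrightarrow> emb (of_nat n) = of_nat n"
  by (induction n) (simp_all add: field_embedding_def)

lemma field_embedding_eq_0_iff:
  assumes "field_embedding (emb :: 'f::field \<Rightarrow> 'e::field)"
  shows "emb a = 0 \<longleftrightarrow> a = 0"
proof
  assume "emb a = 0"
  show "a = 0"
  proof (rule ccontr)
    assume "a \<noteq> 0"
    hence "emb a * emb (inverse a) = 1" using assms by (metis field_embedding_def right_inverse)
    with \<open>emb a = 0\<close> show False by simp
  qed
qed (use assms in \<open>simp add: field_embedding_def\<close>)

lemma CHAR_field_embedding:
  assumes "field_embedding (emb :: 'f::field \<Rightarrow> 'e::field)"
  shows "CHAR('e) = CHAR('f)"
proof -
  have of_nat_eq_0: "(of_nat n :: 'e) = 0 \<longleftrightarrow> (of_nat n :: 'f) = 0" for n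
    using field_embedding_eq_0_iff[OF assms, of "of_nat n"] field_embedding_of_nat[OF assms, of n]
    by simp
  show ?thesis
    by (rule CHAR_eqI) (simp_all add: of_nat_eq_0 of_nat_eq_0_iff_char_dvd)
qed

lemma mult_subgroup_pow_card:
  fixes L :: "'e::field set"
  assumes "mult_subgroup L" "finite L" "x \<in> L"
  shows "x ^ card L = 1"
proof -
  have nonzero: "y \<noteq> 0" if "y \<in> L" for y
    using assms(1) that by (auto simp: mult_subgroup_def)
  have "(\<Prod>y\<in>L. x * y) = (\<Prod>y\<in>L. y)"
    using assms nonzero[OF assms(3)]
    by (intro prod.reindex_bij_witness[of _ "\<lambda>y. inverse x * y" "\<lambda>y. x * y"])
       (auto simp: mult_subgroup_def mult.assoc[symmetric])
  hence "x ^ card L * (\<Prod>y\<in>L. y) = (\<Prod>y\<in>L. y)" by (simp add: prod.distrib)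
  moreover have "(\<Prod>y\<in>L. y) \<noteq> 0" using assms(2) nonzero by (auto simp: prod_zero_iff)
  ultimately show ?thesis by simp
qed

lemma card_le_if_pow_eq_1:
  fixes A :: "'a::idom set"
  assumes "n > 0" "\<And>x. x \<in> A \<Longrightarrow> x ^ n = 1"
  shows "card A \<le> n"
proof -
  have "(monom 1 n - 1 :: 'a poly) \<noteq> 0"
    using degree_monom_minus_1[OF assms(1), where 'a='a] assms by (metis degree_0 less_irrefl)
  moreover have "A \<subseteq> {x. poly (monom 1 n - 1) x = 0}"
    using assms(2) by (auto simp: poly_monom)
  ultimately have "card A \<le> card {x. poly (monom 1 n - 1 :: 'a poly) x = 0}"
    by (intro card_mono poly_roots_finite)
  also have "\<dots> \<le> n"
    using card_poly_roots_bound[OF \<open>monom 1 n - 1 \<noteq> 0\<close>]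
      degree_monom_minus_1[OF assms(1), where 'a='a]
    by linarith
  finally show ?thesis .
qed

text \<open>If card L = p n, then (x ^ n - 1) ^ p = x ^ (p n) - 1 = 0 for all x in L, so L would
  consist of the at most n roots of x ^ n - 1.\<close>

lemma coprime_card_mult_subgroup:
  fixes L :: "'e::field set"
  assumes L: "mult_subgroup L" "finite L" and "CHAR('e) > 0"
  shows "coprime (card L) CHAR('e)"
proof (rule ccontr)
  define p where "p = CHAR('e)"
  have "prime p" unfolding p_def using \<open>CHAR('e) > 0\<close> by (rule prime_CHAR_semidom)
  assume "\<not> coprime (card L) CHAR('e)"
  then obtain n where n: "card L = p * n"
    using \<open>prime p\<close> by (metis coprime_commute p_def prime_imp_coprime dvdE)
  have "card L > 0" using L by (auto simp: mult_subgroup_def card_gt_0_iff)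
  hence "n > 0" "n < card L" using n prime_gt_1_nat[OF \<open>prime p\<close>] by auto
  have "x ^ n = 1" if "x \<in> L" for x
  proof -
    have "(x ^ n + (- 1)) ^ p = (x ^ n) ^ p + (- 1) ^ p"
      by (rule freshmans_dream) (use \<open>prime p\<close> p_def in auto)
    hence "(x ^ n - 1) ^ p = (x ^ n) ^ p + (- 1) ^ p" by simp
    also have "\<dots> = x ^ card L - 1"
      using minus_power_prime_CHAR[OF p_def \<open>prime p\<close>, of 1] n
      by (simp add: power_mult[symmetric] mult.commute)
    also have "\<dots> = 0" using mult_subgroup_pow_card[OF L that] by simp
    finally show ?thesis by simp
  qed
  thus False using card_le_if_pow_eq_1[OF \<open>n > 0\<close>, of L] \<open>n < card L\<close> by simp
qed

lemma mult_cosets_eq: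
  fixes M :: "'e::field set"
  assumes "mult_subgroup M" "c \<in> (\<lambda>x. a * x) ` M" "c \<in> (\<lambda>x. b * x) ` M"
  shows "(\<lambda>x. a * x) ` M = (\<lambda>x. b * x) ` M"
proof -
  have sub: "(\<lambda>x. b * x) ` M \<subseteq> (\<lambda>x. a * x) ` M"
    if "c \<in> (\<lambda>x. a * x) ` M" "c \<in> (\<lambda>x. b * x) ` M" for a b
  proof
    from that obtain x y where xy: "x \<in> M" "y \<in> M" "c = a * x" "c = b * y" by auto
    hence "y \<noteq> 0" using assms(1) by (auto simp: mult_subgroup_def)
    hence b: "b = a * (x * inverse y)" using xy by (simp add: field_simps)
    fix w assume "w \<in> (\<lambda>x. b * x) ` M"
    then obtain z where "z \<in> M" "w = a * (x * inverse y * z)" by (auto simp: b mult.assoc)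
    moreover have "x * inverse y * z \<in> M"
      using assms(1) xy \<open>z \<in> M\<close> by (auto simp: mult_subgroup_def)
    ultimately show "w \<in> (\<lambda>x. a * x) ` M" by auto
  qed
  show ?thesis using sub assms(2,3) by blast
qed

lemma mult_subgroup_coset_decomposition:
  fixes M L :: "'e::field set"
  assumes M: "mult_subgroup M" "finite M" and L: "mult_subgroup L" "finite L" and "M \<subseteq> L"
  obtains c where "card L = card M * (card L div card M)"
    and "L = (\<Union>i<card L div card M. (\<lambda>x. c i * x) ` M)"
proof -
  define coset where "coset a = (\<lambda>x. a * x) ` M" for a
  define R where "R = coset ` L"
  have "1 \<in> M" using M by (simp add: mult_subgroup_def)
  have coset_subset: "coset a \<subseteq> L" if "a \<in> L" for a
    using that L \<open>M \<subseteq> L\<close> by (auto simp: coset_def mult_subgroup_def)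
  have "\<Union>R = L"
    using coset_subset \<open>1 \<in> M\<close> by (force simp: R_def coset_def)
  have card_coset: "card (coset a) = card M" if "a \<in> L" for a
    using that L unfolding coset_def by (intro card_image) (auto simp: inj_on_def mult_subgroup_def)
  have disjoint: "C \<inter> C' = {}" if "C \<in> R" "C' \<in> R" "C \<noteq> C'" for C C'
    using that mult_cosets_eq[OF M(1)] unfolding R_def coset_def by blast
  have "card M * card R = card L"
    unfolding \<open>\<Union>R = L\<close>[symmetric] using L(2) M(2) disjoint card_coset
    by (intro card_partition) (auto simp: R_def coset_def)
  moreover have "card M > 0" using M \<open>1 \<in> M\<close> by (auto simp: card_gt_0_iff)
  ultimately have k: "card L div card M = card R" by (metis div_mult_self1_is_m)
  obtain h where h: "bij_betw h {..<card R} R"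
    using ex_bij_betw_nat_finite[of R] L by (auto simp: R_def atLeast0LessThan)
  obtain rep where rep: "\<forall>C\<in>R. rep C \<in> L \<and> coset (rep C) = C"
    using bchoice[of R "\<lambda>C a. a \<in> L \<and> coset a = C"] unfolding R_def by blast
  have "L = (\<Union>i<card R. coset (rep (h i)))"
    using \<open>\<Union>R = L\<close> rep bij_betw_imp_surj_on[OF h] bij_betwE[OF h] by auto
  thus ?thesis
    using that[of "rep \<circ> h"] k \<open>card M * card R = card L\<close> by (simp add: coset_def)
qed

section \<open>Interleaving sequences\<close>

definition interleave :: "(nat \<Rightarrow> 'a::times) \<Rightarrow> nat \<Rightarrow> (int \<Rightarrow> 'a) \<Rightarrow> int \<Rightarrow> 'a"
  where
  "interleave c k s j = c (nat (j mod int k)) * s (j div int k)"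

lemma interleave_add_multiple:
  "k > 0 \<Longrightarrow> interleave c k s (j + int k * l) = c (nat (j mod int k)) * s (j div int k + l)"
  by (simp add: interleave_def add.commute)

lemma interleave_periodic:
  assumes "k > 0" "\<And>n. s (n + int m) = s n"
  shows "interleave c k s (n + int (m * k)) = interleave c k s n"
  using interleave_add_multiple[OF assms(1), of c s n "int m"] assms(2)
  by (simp add: interleave_def mult.commute)

lemma image_interleave:
  assumes "k > 0" "s ` {0..<int m} = M"
  shows "interleave c k s ` {0..<int (m * k)} = (\<Union>i<k. (\<lambda>x. c i * x) ` M)"
proof
  show "interleave c k s ` {0..<int (m * k)} \<subseteq> (\<Union>i<k. (\<lambda>x. c i * x) ` M)"
  proof clarify
    fix j :: int assume j: "j \<in> {0..<int (m * k)}"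
    have "j div int k * int k \<le> j"
      using div_mult_mod_eq[of j "int k"] pos_mod_sign[of "int k" j] assms(1) by linarith
    hence "j div int k * int k < int m * int k" using j by simp
    hence "j div int k < int m" using assms(1) by (simp add: mult_less_cancel_right)
    moreover have "0 \<le> j div int k" using j assms(1) by (simp add: pos_imp_zdiv_nonneg_iff)
    ultimately have "s (j div int k) \<in> M" using assms(2) by auto
    moreover have "nat (j mod int k) < k" using assms(1) by (simp add: nat_less_iff)
    ultimately show "interleave c k s j \<in> (\<Union>i<k. (\<lambda>x. c i * x) ` M)"
      by (auto simp: interleave_def)
  qed
next
  show "(\<Union>i<k. (\<lambda>x. c i * x) ` M) \<subseteq> interleave c k s ` {0..<int (m * k)}"
  proof clarify
    fix i x assume "i < k" "x \<in> M"
    then obtain q where q: "0 \<le> q" "q < int m" "x = s q" using assms(2) by auto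
    have "q * int k + int i < int (m * k)"
      using q \<open>i < k\<close> mult_right_mono[of "q + 1" "int m" "int k"] by (simp add: algebra_simps)
    moreover have "interleave c k s (q * int k + int i) = c i * x"
      using q \<open>i < k\<close> by (simp add: interleave_def)
    ultimately show "c i * x \<in> interleave c k s ` {0..<int (m * k)}"
      using q by (intro image_eqI[of _ _ "q * int k + int i"]) auto
  qed
qed

text \<open>Only the terms t (j + k l), which all carry the same factor c (j mod k), enter
  the recurrence of f(x ^ k) at j.\<close>

lemma f_sequence_interleave:
  assumes emb: "field_embedding emb" and "k > 0" and s: "f_sequence emb f s"
  shows "f_sequence emb (f \<circ>\<^sub>p monom 1 k) (interleave c k s)"
  unfolding f_sequence_def
proof
  fix j :: int
  define d where "d = degree f"
  define t where "t = interleave c k s"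
  have "(\<Sum>i\<le>degree (f \<circ>\<^sub>p monom 1 k). emb (coeff (f \<circ>\<^sub>p monom 1 k) i) * t (j + int i))
      = (\<Sum>i\<le>d * k. \<Sum>l\<le>d. if k * l = i then emb (coeff f l) * t (j + int i) else 0)"
    using emb unfolding d_def
    by (simp add: degree_pcompose degree_monom_eq coeff_pcompose_monom field_embedding_sum
        sum_distrib_right) (intro sum.cong refl; simp add: field_embedding_def)
  also have "\<dots> = (\<Sum>l\<le>d. \<Sum>i\<le>d * k. if k * l = i then emb (coeff f l) * t (j + int i) else 0)"
    by (rule sum.swap)
  also have "\<dots> = (\<Sum>l\<le>d. emb (coeff f l) * t (j + int k * int l))"
    by (intro sum.cong refl) (simp add: mult.commute[of k] mult.commute[of "int k"] mult_le_mono1)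
  also have "\<dots> = c (nat (j mod int k)) * (\<Sum>l\<le>d. emb (coeff f l) * s (j div int k + int l))"
    unfolding t_def interleave_add_multiple[OF \<open>k > 0\<close>] by (simp add: sum_distrib_left mult_ac)
  also have "\<dots> = 0" using s by (simp add: f_sequence_def d_def)
  finally show "(\<Sum>i\<le>degree (f \<circ>\<^sub>p monom 1 k).
      emb (coeff (f \<circ>\<^sub>p monom 1 k) i) * interleave c k s (j + int i)) = 0"
    by (simp add: t_def)
qed

theorem mainTheorem12:
  fixes emb :: "'f::field \<Rightarrow> 'e::field"
    and f :: "'f poly" and M L :: "'e set" and k :: nat
  assumes "field_embedding emb"
    and "ans_subgroup emb f M"
    and "finite L" and "mult_subgroup L" and "M \<subseteq> L"
    and "k = card L div card M"
  shows "ans_subgroup emb (f \<circ>\<^sub>p monom 1 k) L"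
proof -
  let ?m = "card M"
  have M: "finite M" "?m > 1" "mult_subgroup M"
    and f_dvd: "f dvd (monom 1 ?m - 1) div ([:-1, 1:] * cyclo_red ?m)"
    and "\<exists>s. f_sequence emb f s \<and> (\<forall>n. s (n + int ?m) = s n) \<and> s ` {0..<int ?m} = M"
    using assms(2) unfolding ans_subgroup_def Let_def by blast+
  then obtain s where s: "f_sequence emb f s" "\<And>n. s (n + int ?m) = s n" "s ` {0..<int ?m} = M"
    by blast
  obtain c where card_L: "card L = ?m * k" and L: "L = (\<Union>i<k. (\<lambda>x. c i * x) ` M)"
    using mult_subgroup_coset_decomposition[OF M(3,1) assms(4,3,5)] assms(6) by metis
  have "card L > 0" using assms(3,4) by (auto simp: mult_subgroup_def card_gt_0_iff)
  hence "k > 0" using card_L by (auto intro: Nat.gr0I)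
  hence "card L > 1" using card_L M(2) less_le_trans[of 1 ?m "?m * k"] by simp
  moreover have "CHAR('f) > 0 \<longrightarrow> coprime (card L) CHAR('f)"
    using coprime_card_mult_subgroup[OF assms(4,3)] CHAR_field_embedding[OF assms(1)] by simp
  moreover have "f \<circ>\<^sub>p monom 1 k dvd (monom 1 (card L) - 1) div ([:-1, 1:] * cyclo_red (card L))"
    unfolding card_L by (rule pcompose_monom_dvd_cyclo_quotient[OF M(2) \<open>k > 0\<close> f_dvd])
  moreover have "f_sequence emb (f \<circ>\<^sub>p monom 1 k) (interleave c k s)"
    by (rule f_sequence_interleave[OF assms(1) \<open>k > 0\<close> s(1)])
  moreover have "interleave c k s (n + int (card L)) = interleave c k s n" for n
    unfolding card_L using s(2) by (rule interleave_periodic[OF \<open>k > 0\<close>])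
  moreover have "interleave c k s ` {0..<int (card L)} = L"
    using image_interleave[OF \<open>k > 0\<close> s(3), of c] by (simp only: card_L L[symmetric])
  ultimately show ?thesis
    using assms(3,4) unfolding ans_subgroup_def Let_def by blast
qed

end
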